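(* Let $X$ and $Y$ be finite $T_0$-spaces. If $X$ is simple homotopy equivalent to $Y$, then $\overline{\mathrm{rank}}(X)=\overline{\mathrm{rank}}(Y)$, where $\overline{\mathrm{rank}}(X):=|X|-\mathrm{rank}(X_M)$.
   Context: A finite $T_0$-space is identified with a finite poset via $x\le y$ iff $U_x\subseteq U_y$, where $U_x$ is the minimal open set containing $x$. For a labelling $X=\{x_1,\dots,x_n\}$, $X_M=(x_{i,j})$ is the $n\times n$ matrix with $x_{i,j}=0$ if $x_i\le x_j$ and $x_{i,j}=1$ otherwise. A point $x$ is a weak beat point if $\{y:y<x\}$ is contractible or $\{y:y>x\}$ is contractible. Two finite $T_0$-spaces are simple homotopy equivalent if one can be obtained from the other (up to homeomorphism) by a finite sequence of adding and removing weak beat points one at a time. *)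

theory Defs
  imports "HOL-Analysis.Homotopy" "Jordan_Normal_Form.DL_Rank"
begin

text \<open>A finite T0-space is represented as a finite poset (S, R): S a finite carrier,
  R \<subseteq> S \<times> S a partial order on S, with (x,y) \<in> R meaning x \<le> y, i.e. U_x \<subseteq> U_y.\<close>

definition finite_T0 :: "'a set \<Rightarrow> ('a \<times> 'a) set \<Rightarrow> bool" where
  "finite_T0 S R \<longleftrightarrow> finite S \<and> R \<subseteq> S \<times> S \<and> (\<forall>x\<in>S. (x,x) \<in> R)
     \<and> (\<forall>x y. (x,y) \<in> R \<and> (y,x) \<in> R \<longrightarrow> x = y)
     \<and> (\<forall>x y z. (x,y) \<in> R \<and> (y,z) \<in> R \<longrightarrow> (x,z) \<in> R)"

definition poset_topology :: "'a set \<Rightarrow> ('a \<times> 'a) set \<Rightarrow> 'a topology" where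
  "poset_topology S R = topology (\<lambda>U. U \<subseteq> S \<and> (\<forall>x\<in>U. \<forall>y\<in>S. (y,x) \<in> R \<longrightarrow> y \<in> U))"

text \<open>Contractibility of a subspace A (with the induced order); the empty space is not contractible.\<close>

definition poset_contractible :: "'a set \<Rightarrow> ('a \<times> 'a) set \<Rightarrow> bool" where
  "poset_contractible A R \<longleftrightarrow> A \<noteq> {} \<and> contractible_space (poset_topology A (R \<inter> (A \<times> A)))"

definition weak_beat_point :: "'a set \<Rightarrow> ('a \<times> 'a) set \<Rightarrow> 'a \<Rightarrow> bool" where
  "weak_beat_point S R x \<longleftrightarrow> x \<in> S \<and>
     (poset_contractible {y \<in> S. (y,x) \<in> R \<and> y \<noteq> x} R \<or>
      poset_contractible {y \<in> S. (x,y) \<in> R \<and> y \<noteq> x} R)"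

text \<open>Homeomorphism of finite T0-spaces = order isomorphism.\<close>

definition poset_homeomorphic :: "'a set \<Rightarrow> ('a \<times> 'a) set \<Rightarrow> 'b set \<Rightarrow> ('b \<times> 'b) set \<Rightarrow> bool" where
  "poset_homeomorphic S R T Q \<longleftrightarrow>
     (\<exists>f. bij_betw f S T \<and> (\<forall>x\<in>S. \<forall>y\<in>S. (x,y) \<in> R \<longleftrightarrow> (f x, f y) \<in> Q))"

text \<open>One elementary move: removing or adding a single weak beat point
  (spaces realised inside the infinite type nat, so fresh points are always available).\<close>

definition elementary_move :: "nat set \<times> (nat \<times> nat) set \<Rightarrow> nat set \<times> (nat \<times> nat) set \<Rightarrow> bool" where
  "elementary_move P Q \<longleftrightarrow> finite_T0 (fst P) (snd P) \<and> finite_T0 (fst Q) (snd Q) \<and>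
     ((\<exists>x. weak_beat_point (fst P) (snd P) x \<and> fst Q = fst P - {x}
           \<and> snd Q = snd P \<inter> (fst Q \<times> fst Q)) \<or>
      (\<exists>x. weak_beat_point (fst Q) (snd Q) x \<and> fst P = fst Q - {x}
           \<and> snd P = snd Q \<inter> (fst P \<times> fst P)))"

definition simple_homotopy_equivalent ::
  "'a set \<Rightarrow> ('a \<times> 'a) set \<Rightarrow> 'b set \<Rightarrow> ('b \<times> 'b) set \<Rightarrow> bool" where
  "simple_homotopy_equivalent S R T Q \<longleftrightarrow>
     (\<exists>P0 P1. poset_homeomorphic S R (fst P0) (snd P0) \<and> elementary_move\<^sup>*\<^sup>* P0 P1
        \<and> poset_homeomorphic (fst P1) (snd P1) T Q)"

definition poset_matrix :: "'a set \<Rightarrow> ('a \<times> 'a) set \<Rightarrow> (nat \<Rightarrow> 'a) \<Rightarrow> real mat" where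
  "poset_matrix S R lab = mat (card S) (card S) (\<lambda>(i,j). if (lab i, lab j) \<in> R then 0 else 1)"

definition rank_bar :: "'a set \<Rightarrow> ('a \<times> 'a) set \<Rightarrow> int" where
  "rank_bar S R = int (card S) -
     int (vec_space.rank (card S) (poset_matrix S R (SOME lab. bij_betw lab {..<card S} S)))"

end

theory Submission
  imports Defs
begin

(* Write X_M = J - Z, where J is the all-ones matrix and Z the zeta matrix of the poset, which
   is triangular up to relabelling and hence invertible.  Then rank X_M >= |X| - 1, and X_M is
   singular exactly when the vector w = Z^-1 1 has coordinate sum 1.  By Hall's theorem w is
   expressed through chains, and its coordinate sum is the Euler characteristic of the order
   complex.  So rank_bar X is 1 or 0 according as the reduced Euler characteristic of X vanishes
   or not.

   Removing a point x changes the reduced Euler characteristic by the product of those of its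
   strict down-set and strict up-set, so it suffices that contractible finite spaces have
   reduced Euler characteristic 0.  A homotopy from the identity to a constant map yields a
   fence of pairwise comparable order-preserving maps.  Following Stong, such a fence can be
   pushed through the retraction that removes a beat point, so induction on the size of the
   space ends in a space without beat points, where the fence is constant and the space is a
   point. *)

lemma finite_T0_finite: "finite_T0 S R \<Longrightarrow> finite S"
  unfolding finite_T0_def by blast

lemma finite_T0_refl: "finite_T0 S R \<Longrightarrow> x \<in> S \<Longrightarrow> (x, x) \<in> R"
  unfolding finite_T0_def by blast

lemma finite_T0_antisym: "finite_T0 S R \<Longrightarrow> (x, y) \<in> R \<Longrightarrow> (y, x) \<in> R \<Longrightarrow> x = y"
  unfolding finite_T0_def by blast

lemma finite_T0_trans: "finite_T0 S R \<Longrightarrow> (x, y) \<in> R \<Longrightarrow> (y, z) \<in> R \<Longrightarrow> (x, z) \<in> R"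
  unfolding finite_T0_def by blast

lemma finite_T0_subset:
  assumes "finite_T0 S R" and "B \<subseteq> S"
  shows "finite_T0 B (R \<inter> B \<times> B)"
  using assms finite_subset[OF assms(2)] unfolding finite_T0_def by blast

lemma finite_T0_converse: "finite_T0 S R \<Longrightarrow> finite_T0 S (R\<inverse>)"
  unfolding finite_T0_def by blast

lemma finite_T0_has_minimal:
  assumes "finite_T0 S R" and "B \<subseteq> S" and "B \<noteq> {}"
  shows "\<exists>m\<in>B. \<forall>y\<in>B. (y, m) \<in> R \<longrightarrow> y = m"
proof -
  let ?less = "\<lambda>x y. (x, y) \<in> R \<and> x \<noteq> y"
  have "finite B"
    using assms(1,2) finite_T0_finite finite_subset by blast
  moreover have "asymp_on B ?less" "transp_on B ?less"
    using finite_T0_antisym[OF assms(1)] finite_T0_trans[OF assms(1)]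
    by (auto simp: asymp_on_def transp_on_def)
  ultimately show ?thesis
    using Finite_Set.bex_min_element[of B ?less] assms(3) by blast
qed

lemma finite_T0_has_maximal:
  assumes "finite_T0 S R" and "B \<subseteq> S" and "B \<noteq> {}"
  shows "\<exists>m\<in>B. \<forall>y\<in>B. (m, y) \<in> R \<longrightarrow> y = m"
  using finite_T0_has_minimal[OF finite_T0_converse[OF assms(1)] assms(2,3)] by blast

section \<open>Chains and the reduced Euler characteristic\<close>

definition poset_chains :: "'a set \<Rightarrow> ('a \<times> 'a) set \<Rightarrow> 'a set set" where
  "poset_chains S R = {c. c \<subseteq> S \<and> (\<forall>a\<in>c. \<forall>b\<in>c. (a, b) \<in> R \<or> (b, a) \<in> R)}"

text \<open>The nonempty chains are the simplices of the order complex; the empty chain supplies the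
  correction term of the reduced Euler characteristic.\<close>

definition reduced_euler_char :: "'a set \<Rightarrow> ('a \<times> 'a) set \<Rightarrow> int" where
  "reduced_euler_char S R = - (\<Sum>c\<in>poset_chains S R. (-1) ^ card c)"

lemma finite_poset_chains: "finite S \<Longrightarrow> finite (poset_chains S R)"
  unfolding poset_chains_def by (rule finite_subset[of _ "Pow S"]) auto

lemma poset_chains_restrict: "poset_chains S (R \<inter> S \<times> S) = poset_chains S R"
  unfolding poset_chains_def by blast

lemma poset_chains_converse: "poset_chains S (R\<inverse>) = poset_chains S R"
  unfolding poset_chains_def by blast

lemma reduced_euler_char_restrict:
  "reduced_euler_char S (R \<inter> S \<times> S) = reduced_euler_char S R"
  unfolding reduced_euler_char_def poset_chains_restrict ..

lemma reduced_euler_char_converse: "reduced_euler_char S (R\<inverse>) = reduced_euler_char S R"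
  unfolding reduced_euler_char_def poset_chains_converse ..

lemma reduced_euler_char_cone:
  assumes "finite S" and "m \<in> S" and "(m, m) \<in> R" and "\<forall>z\<in>S. (m, z) \<in> R \<or> (z, m) \<in> R"
  shows "reduced_euler_char S R = 0"
proof -
  define A where "A = {c\<in>poset_chains S R. m \<notin> c}"
  have chains: "poset_chains S R = A \<union> insert m ` A"
  proof (intro equalityI subsetI)
    fix c assume c: "c \<in> poset_chains S R"
    show "c \<in> A \<union> insert m ` A"
    proof (cases "m \<in> c")
      case True
      then have "c = insert m (c - {m})" and "c - {m} \<in> A"
        using c by (auto simp: A_def poset_chains_def)
      then show ?thesis by blast
    qed (use c A_def in blast)
  next
    fix c assume "c \<in> A \<union> insert m ` A"
    then show "c \<in> poset_chains S R"
      using assms(2-4) by (auto simp: A_def poset_chains_def)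
  qed
  have finite_A: "finite A"
    using finite_poset_chains[OF assms(1)] by (simp add: A_def)
  have card_insert_m: "card (insert m c) = Suc (card c)" if "c \<in> A" for c
  proof -
    have "finite c" "m \<notin> c"
      using that finite_subset[OF _ assms(1)] by (auto simp: A_def poset_chains_def)
    then show ?thesis by simp
  qed
  have disjoint: "A \<inter> insert m ` A = {}"
    unfolding A_def by blast
  have "inj_on (insert m) A"
    unfolding inj_on_def A_def by (metis (mono_tags, lifting) Diff_insert_absorb mem_Collect_eq)
  then have "(\<Sum>c\<in>insert m ` A. (-1::int) ^ card c) = (\<Sum>c\<in>A. (-1) ^ card (insert m c))"
    by (simp add: sum.reindex)
  also have "\<dots> = - (\<Sum>c\<in>A. (-1) ^ card c)"
    by (simp add: card_insert_m sum_negf[symmetric])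
  finally show ?thesis
    unfolding reduced_euler_char_def chains using finite_A disjoint by (simp add: sum.union_disjoint)
qed

lemma poset_chains_through_point:
  assumes "finite_T0 S R" and "x \<in> S"
    and "D = {y\<in>S. (y, x) \<in> R \<and> y \<noteq> x}" and "U = {y\<in>S. (x, y) \<in> R \<and> y \<noteq> x}"
  shows "bij_betw (\<lambda>(a, b). insert x (a \<union> b)) (poset_chains D R \<times> poset_chains U R)
           {c\<in>poset_chains S R. x \<in> c}"
proof -
  let ?join = "\<lambda>(a, b). insert x (a \<union> b)" and ?split = "\<lambda>c. (c \<inter> D, c \<inter> U)"
  have disjoint: "D \<inter> U = {}" "x \<notin> D" "x \<notin> U"
    using finite_T0_antisym[OF assms(1)] unfolding assms(3,4) by blast+
  have below_above: "(a, b) \<in> R" if "a \<in> D" "b \<in> U" for a b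
    using that finite_T0_trans[OF assms(1)] unfolding assms(3,4) by blast
  have "\<forall>p\<in>poset_chains D R \<times> poset_chains U R. ?split (?join p) = p"
    using disjoint by (auto simp: poset_chains_def)
  moreover have "\<forall>c\<in>{c\<in>poset_chains S R. x \<in> c}. ?join (?split c) = c"
    unfolding assms(3,4) poset_chains_def by blast
  moreover have "?join ` (poset_chains D R \<times> poset_chains U R) \<subseteq> {c\<in>poset_chains S R. x \<in> c}"
    using assms(2) finite_T0_refl[OF assms(1)] below_above
    unfolding assms(3,4) poset_chains_def by blast
  moreover have "?split ` {c\<in>poset_chains S R. x \<in> c} \<subseteq> poset_chains D R \<times> poset_chains U R"
    unfolding assms(3,4) poset_chains_def by blast
  ultimately show ?thesis
    by (rule bij_betw_byWitness)
qed

lemma reduced_euler_char_remove_point: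
  assumes "finite_T0 S R" and "x \<in> S"
  shows "reduced_euler_char S R = reduced_euler_char (S - {x}) R
    + reduced_euler_char {y\<in>S. (y, x) \<in> R \<and> y \<noteq> x} R * reduced_euler_char {y\<in>S. (x, y) \<in> R \<and> y \<noteq> x} R"
proof -
  define D where "D = {y\<in>S. (y, x) \<in> R \<and> y \<noteq> x}"
  define U where "U = {y\<in>S. (x, y) \<in> R \<and> y \<noteq> x}"
  let ?B = "{c\<in>poset_chains S R. x \<in> c}"
  let ?sgn = "\<lambda>c. (-1::int) ^ card c"
  have finite: "finite S" "finite D" "finite U"
    using finite_T0_finite[OF assms(1)] by (auto simp: D_def U_def)
  have card_join: "card (insert x (a \<union> b)) = Suc (card a + card b)"
    if "a \<in> poset_chains D R" "b \<in> poset_chains U R" for a b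
  proof -
    have "a \<subseteq> D" "b \<subseteq> U" "D \<inter> U = {}" "x \<notin> D \<union> U"
      using that finite_T0_antisym[OF assms(1)] by (auto simp: poset_chains_def D_def U_def)
    then have "finite a" "finite b" "a \<inter> b = {}" "x \<notin> a \<union> b"
      using finite finite_subset by blast+
    then show ?thesis
      by (simp add: card_Un_disjoint)
  qed
  have "(\<Sum>c\<in>?B. ?sgn c) = (\<Sum>(a, b)\<in>poset_chains D R \<times> poset_chains U R. ?sgn (insert x (a \<union> b)))"
    using sum.reindex_bij_betw[OF poset_chains_through_point[OF assms D_def U_def], of ?sgn]
    by (simp add: case_prod_unfold)
  also have "\<dots> = (\<Sum>(a, b)\<in>poset_chains D R \<times> poset_chains U R. - (?sgn a * ?sgn b))"
    by (intro sum.cong) (auto simp: card_join power_add)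
  also have "\<dots> = - ((\<Sum>a\<in>poset_chains D R. ?sgn a) * (\<Sum>b\<in>poset_chains U R. ?sgn b))"
    by (simp add: sum_negf sum_product sum.cartesian_product case_prod_beta)
  also have "\<dots> = - (reduced_euler_char D R * reduced_euler_char U R)"
    by (simp add: reduced_euler_char_def)
  finally have through_x: "(\<Sum>c\<in>?B. ?sgn c) = - (reduced_euler_char D R * reduced_euler_char U R)" .
  have split: "poset_chains (S - {x}) R \<union> ?B = poset_chains S R"
    unfolding poset_chains_def by blast
  have "(\<Sum>c\<in>poset_chains (S - {x}) R \<union> ?B. ?sgn c) = (\<Sum>c\<in>poset_chains (S - {x}) R. ?sgn c) + (\<Sum>c\<in>?B. ?sgn c)"
    using finite_poset_chains[of S R] finite_poset_chains[of "S - {x}" R] finite(1)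
    by (intro sum.union_disjoint) (auto simp: poset_chains_def)
  then have "reduced_euler_char S R = reduced_euler_char (S - {x}) R - (\<Sum>c\<in>?B. ?sgn c)"
    unfolding split reduced_euler_char_def by simp
  then show ?thesis
    using through_x unfolding D_def U_def by simp
qed

lemma image_poset_chains:
  assumes f: "bij_betw f S T" and iso: "\<forall>x\<in>S. \<forall>y\<in>S. (x, y) \<in> R \<longleftrightarrow> (f x, f y) \<in> Q"
  shows "image f ` poset_chains S R = poset_chains T Q"
proof (intro equalityI subsetI)
  fix c' assume "c' \<in> image f ` poset_chains S R"
  then obtain c where c: "c \<subseteq> S" "\<forall>a\<in>c. \<forall>b\<in>c. (a, b) \<in> R \<or> (b, a) \<in> R"
    and c': "c' = f ` c"
    unfolding poset_chains_def by blast
  have "f ` c \<subseteq> T"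
    using c(1) f by (auto simp: bij_betw_def)
  moreover have "\<forall>u\<in>f ` c. \<forall>v\<in>f ` c. (u, v) \<in> Q \<or> (v, u) \<in> Q"
  proof (intro ballI)
    fix u v assume "u \<in> f ` c" "v \<in> f ` c"
    then obtain a b where "a \<in> c" "b \<in> c" "u = f a" "v = f b"
      by blast
    then show "(u, v) \<in> Q \<or> (v, u) \<in> Q"
      using c iso by blast
  qed
  ultimately show "c' \<in> poset_chains T Q"
    unfolding c' poset_chains_def by blast
next
  fix c' assume c': "c' \<in> poset_chains T Q"
  then have "c' = f ` {x\<in>S. f x \<in> c'}" and "{x\<in>S. f x \<in> c'} \<in> poset_chains S R"
    using f iso by (auto simp: poset_chains_def bij_betw_def)
  then show "c' \<in> image f ` poset_chains S R" by blast
qed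

lemma reduced_euler_char_poset_homeomorphic:
  assumes "poset_homeomorphic S R T Q"
  shows "reduced_euler_char S R = reduced_euler_char T Q"
proof -
  obtain f where f: "bij_betw f S T" and iso: "\<forall>x\<in>S. \<forall>y\<in>S. (x, y) \<in> R \<longleftrightarrow> (f x, f y) \<in> Q"
    using assms unfolding poset_homeomorphic_def by blast
  have "poset_chains S R \<subseteq> Pow S"
    unfolding poset_chains_def by blast
  then have chains: "bij_betw (image f) (poset_chains S R) (poset_chains T Q)"
    by (rule bij_betw_subset[OF bij_betw_Pow[OF f] _ image_poset_chains[OF f iso]])
  have "card (f ` c) = card c" if "c \<in> poset_chains S R" for c
    by (rule card_image, rule inj_on_subset[OF bij_betw_imp_inj_on[OF f]])
      (use that in \<open>simp add: poset_chains_def\<close>)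
  then show ?thesis
    unfolding reduced_euler_char_def
    using sum.reindex_bij_betw[OF chains, of "\<lambda>c. (-1::int) ^ card c"] by simp
qed

section \<open>The corank of the matrix X_M\<close>

text \<open>By Hall's theorem this is the row sum at y of the Moebius function, i.e. the y-entry of
  Z^-1 applied to the all-ones vector.\<close>

definition euler_weight :: "'a set \<Rightarrow> ('a \<times> 'a) set \<Rightarrow> 'a \<Rightarrow> int" where
  "euler_weight S R y =
     - (\<Sum>c\<in>{c\<in>poset_chains S R. y \<in> c \<and> (\<forall>z\<in>c. (y, z) \<in> R)}. (-1) ^ card c)"

lemma poset_chain_has_least:
  assumes "finite_T0 S R" and "c \<in> poset_chains S R" and "c \<noteq> {}"
  shows "\<exists>m. {y\<in>c. \<forall>z\<in>c. (y, z) \<in> R} = {m}"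
proof -
  have "c \<subseteq> S"
    using assms(2) unfolding poset_chains_def by blast
  then obtain m where m: "m \<in> c" "\<forall>y\<in>c. (y, m) \<in> R \<longrightarrow> y = m"
    using finite_T0_has_minimal[OF assms(1) _ assms(3)] by blast
  have "\<forall>z\<in>c. (m, z) \<in> R"
    using m assms(2) finite_T0_refl[OF assms(1)] \<open>c \<subseteq> S\<close> unfolding poset_chains_def by blast
  then have "{y\<in>c. \<forall>z\<in>c. (y, z) \<in> R} = {m}"
    using m finite_T0_antisym[OF assms(1)] by blast
  then show ?thesis ..
qed

lemma sum_euler_weight_upset:
  assumes "finite_T0 S R" and "T \<subseteq> S" and up: "\<forall>y\<in>T. \<forall>z\<in>S. (y, z) \<in> R \<longrightarrow> z \<in> T"
  shows "(\<Sum>y\<in>T. euler_weight S R y) = 1 + reduced_euler_char T R"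
proof -
  let ?least = "\<lambda>y c. y \<in> c \<and> (\<forall>z\<in>c. (y, z) \<in> R)"
  let ?sgn = "\<lambda>c. (-1::int) ^ card c"
  have finite: "finite T" "finite (poset_chains T R)"
    using finite_T0_finite[OF assms(1)] assms(2) finite_subset finite_poset_chains by blast+
  have chains_from: "{c\<in>poset_chains S R. ?least y c} = {c\<in>poset_chains T R. ?least y c}"
    if "y \<in> T" for y
    using that assms(2) up unfolding poset_chains_def by blast
  have least_sum: "(\<Sum>y\<in>{y\<in>T. ?least y c}. ?sgn c) = ?sgn c - (if c = {} then 1 else 0)"
    if c: "c \<in> poset_chains T R" for c
  proof (cases "c = {}")
    case False
    have "c \<in> poset_chains S R" "c \<subseteq> T"
      using c assms(2) unfolding poset_chains_def by blast+
    then obtain m where "{y\<in>c. \<forall>z\<in>c. (y, z) \<in> R} = {m}"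
      using poset_chain_has_least[OF assms(1) _ False] by blast
    moreover have "{y\<in>T. ?least y c} = {y\<in>c. \<forall>z\<in>c. (y, z) \<in> R}"
      using \<open>c \<subseteq> T\<close> by blast
    ultimately show ?thesis
      using False by simp
  qed simp
  have "(\<Sum>y\<in>T. euler_weight S R y) = - (\<Sum>y\<in>T. \<Sum>c\<in>{c\<in>poset_chains T R. ?least y c}. ?sgn c)"
    by (simp add: euler_weight_def chains_from sum_negf)
  also have "(\<Sum>y\<in>T. \<Sum>c\<in>{c\<in>poset_chains T R. ?least y c}. ?sgn c)
      = (\<Sum>c\<in>poset_chains T R. \<Sum>y\<in>{y\<in>T. ?least y c}. ?sgn c)"
    by (rule sum.swap_restrict[OF finite])
  also have "\<dots> = (\<Sum>c\<in>poset_chains T R. ?sgn c - (if c = {} then 1 else 0))"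
    by (rule sum.cong[OF refl least_sum])
  also have "\<dots> = (\<Sum>c\<in>poset_chains T R. ?sgn c) - 1"
    using finite(2) by (simp add: sum_subtractf poset_chains_def)
  finally show ?thesis
    unfolding reduced_euler_char_def by simp
qed

lemma sum_euler_weight_principal_upset:
  assumes "finite_T0 S R" and "x \<in> S"
  shows "(\<Sum>y\<in>{y\<in>S. (x, y) \<in> R}. euler_weight S R y) = 1"
proof -
  have "reduced_euler_char {y\<in>S. (x, y) \<in> R} R = 0"
    using assms finite_T0_finite[OF assms(1)] finite_T0_refl[OF assms]
    by (intro reduced_euler_char_cone[of _ x]) auto
  moreover have "(\<Sum>y\<in>{y\<in>S. (x, y) \<in> R}. euler_weight S R y)
      = 1 + reduced_euler_char {y\<in>S. (x, y) \<in> R} R"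
    using finite_T0_trans[OF assms(1)] by (intro sum_euler_weight_upset[OF assms(1)]) blast+
  ultimately show ?thesis by simp
qed

lemma sum_upsets_eq_0_imp_eq_0:
  fixes \<phi> :: "'a \<Rightarrow> 'b::comm_monoid_add"
  assumes "finite_T0 S R" and "\<forall>x\<in>S. (\<Sum>y\<in>{y\<in>S. (x, y) \<in> R}. \<phi> y) = 0"
  shows "\<forall>x\<in>S. \<phi> x = 0"
proof (rule ccontr)
  assume "\<not> ?thesis"
  then obtain m where m: "m \<in> S" "\<phi> m \<noteq> 0"
    and maximal: "\<forall>y\<in>S. \<phi> y \<noteq> 0 \<longrightarrow> (m, y) \<in> R \<longrightarrow> y = m"
    using finite_T0_has_maximal[OF assms(1), of "{x\<in>S. \<phi> x \<noteq> 0}"] by auto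
  have "(\<Sum>y\<in>{y\<in>S. (m, y) \<in> R}. \<phi> y) = \<phi> m + (\<Sum>y\<in>{y\<in>S. (m, y) \<in> R} - {m}. \<phi> y)"
    using m finite_T0_finite[OF assms(1)] finite_T0_refl[OF assms(1)] by (intro sum.remove) auto
  also have "(\<Sum>y\<in>{y\<in>S. (m, y) \<in> R} - {m}. \<phi> y) = 0"
    using maximal by (intro sum.neutral) auto
  finally show False
    using assms(2) m by simp
qed

lemma eq_euler_weight_if_sum_upsets_const:
  fixes \<phi> :: "'a \<Rightarrow> real"
  assumes "finite_T0 S R" and "\<forall>x\<in>S. (\<Sum>y\<in>{y\<in>S. (x, y) \<in> R}. \<phi> y) = c"
  shows "\<forall>y\<in>S. \<phi> y = c * euler_weight S R y"
proof -
  have "\<forall>x\<in>S. (\<Sum>y\<in>{y\<in>S. (x, y) \<in> R}. \<phi> y - c * euler_weight S R y) = 0"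
    using assms(2) sum_euler_weight_principal_upset[OF assms(1)]
    by (simp add: sum_subtractf flip: sum_distrib_left of_int_sum)
  then have "\<forall>y\<in>S. \<phi> y - c * euler_weight S R y = 0"
    by (rule sum_upsets_eq_0_imp_eq_0[OF assms(1)])
  then show ?thesis
    by simp
qed

lemma sum_complement_upset:
  fixes \<phi> :: "'a \<Rightarrow> 'b::ring_1"
  assumes "finite S"
  shows "(\<Sum>y\<in>S. (if (x, y) \<in> R then 0 else 1) * \<phi> y) = sum \<phi> S - (\<Sum>y\<in>{y\<in>S. (x, y) \<in> R}. \<phi> y)"
proof -
  have "(\<Sum>y\<in>S. (if (x, y) \<in> R then 0 else 1) * \<phi> y)
      = (\<Sum>y\<in>S. \<phi> y - (if (x, y) \<in> R then \<phi> y else 0))"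
    by (intro sum.cong) auto
  then show ?thesis
    using assms by (simp add: sum_subtractf sum.inter_filter)
qed

definition singular_on :: "'a set \<Rightarrow> ('a \<Rightarrow> 'a \<Rightarrow> real) \<Rightarrow> bool" where
  "singular_on S a \<longleftrightarrow> (\<exists>\<phi>. (\<exists>x\<in>S. \<phi> x \<noteq> 0) \<and> (\<forall>x\<in>S. (\<Sum>y\<in>S. a x y * \<phi> y) = 0))"

lemma singular_on_poset_matrix_iff:
  assumes "finite_T0 S R"
  shows "singular_on S (\<lambda>x y. if (x, y) \<in> R then 0 else 1) \<longleftrightarrow> reduced_euler_char S R = 0"
proof -
  let ?w = "\<lambda>y. real_of_int (euler_weight S R y)"
  note row = sum_complement_upset[OF finite_T0_finite[OF assms]]
  have weight_total: "sum ?w S = 1 + reduced_euler_char S R"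
    using sum_euler_weight_upset[OF assms order_refl] by (simp flip: of_int_sum)
  show ?thesis
  proof
    assume "singular_on S (\<lambda>x y. if (x, y) \<in> R then 0 else 1)"
    then obtain \<phi> :: "'a \<Rightarrow> real" where nonzero: "\<exists>x\<in>S. \<phi> x \<noteq> 0"
      and kernel: "\<forall>x\<in>S. (\<Sum>y\<in>S. (if (x, y) \<in> R then 0 else 1) * \<phi> y) = 0"
      unfolding singular_on_def by blast
    define c where "c = sum \<phi> S"
    have "\<forall>x\<in>S. (\<Sum>y\<in>{y\<in>S. (x, y) \<in> R}. \<phi> y) = c"
      using kernel unfolding c_def by (simp add: row)
    then have \<phi>: "\<forall>y\<in>S. \<phi> y = c * ?w y"
      by (rule eq_euler_weight_if_sum_upsets_const[OF assms])
    then have "c \<noteq> 0"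
      using nonzero by auto
    moreover have "c = c * sum ?w S"
    proof -
      have "sum \<phi> S = (\<Sum>y\<in>S. c * ?w y)"
        using \<phi> by (intro sum.cong) auto
      then show ?thesis
        unfolding c_def[symmetric] by (simp add: sum_distrib_left)
    qed
    ultimately have "sum ?w S = 1"
      by simp
    then show "reduced_euler_char S R = 0"
      using weight_total by simp
  next
    assume "reduced_euler_char S R = 0"
    then have total: "sum ?w S = 1"
      using weight_total by simp
    then have "\<exists>x\<in>S. ?w x \<noteq> 0"
      by (metis sum.neutral zero_neq_one)
    moreover have "(\<Sum>y\<in>{y\<in>S. (x, y) \<in> R}. ?w y) = 1" if "x \<in> S" for x
      using sum_euler_weight_principal_upset[OF assms that] by (metis of_int_1 of_int_sum)
    then have "\<forall>x\<in>S. (\<Sum>y\<in>S. (if (x, y) \<in> R then 0 else 1) * ?w y) = 0"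
      using total by (simp add: row)
    ultimately show "singular_on S (\<lambda>x y. if (x, y) \<in> R then 0 else 1)"
      unfolding singular_on_def by (intro exI[of _ ?w]) simp
  qed
qed

lemma labelled_vec_eq_0_iff:
  assumes "bij_betw lab {..<n} S"
  shows "vec n (\<lambda>j. \<phi> (lab j)) = 0\<^sub>v n \<longleftrightarrow> (\<forall>x\<in>S. \<phi> x = 0)"
  using assms by (auto simp: vec_eq_iff bij_betw_def)

lemma labelled_mat_mult_vec:
  assumes "bij_betw lab {..<n} S"
  shows "mat n n (\<lambda>(i, j). a (lab i) (lab j)) *\<^sub>v vec n (\<lambda>j. \<phi> (lab j))
    = vec n (\<lambda>i. \<Sum>y\<in>S. a (lab i) y * \<phi> y)"
proof (rule eq_vecI)
  fix i assume "i < dim_vec (vec n (\<lambda>i. \<Sum>y\<in>S. a (lab i) y * \<phi> y))"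
  then have "(mat n n (\<lambda>(i, j). a (lab i) (lab j)) *\<^sub>v vec n (\<lambda>j. \<phi> (lab j))) $ i
      = (\<Sum>j<n. a (lab i) (lab j) * \<phi> (lab j))"
    by (simp add: scalar_prod_def atLeast0LessThan)
  also have "\<dots> = (\<Sum>y\<in>S. a (lab i) y * \<phi> y)"
    using sum.reindex_bij_betw[OF assms] by simp
  finally show "(mat n n (\<lambda>(i, j). a (lab i) (lab j)) *\<^sub>v vec n (\<lambda>j. \<phi> (lab j))) $ i
      = vec n (\<lambda>i. \<Sum>y\<in>S. a (lab i) y * \<phi> y) $ i"
    using \<open>i < dim_vec _\<close> by simp
qed simp

lemma det_labelled_mat_eq_0_iff:
  fixes a :: "'a \<Rightarrow> 'a \<Rightarrow> real"
  assumes lab: "bij_betw lab {..<n} S"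
  shows "det (mat n n (\<lambda>(i, j). a (lab i) (lab j))) = 0 \<longleftrightarrow> singular_on S a"
proof -
  let ?M = "mat n n (\<lambda>(i, j). a (lab i) (lab j))"
  have kernel_iff: "vec n (\<lambda>j. \<phi> (lab j)) \<noteq> 0\<^sub>v n \<and> ?M *\<^sub>v vec n (\<lambda>j. \<phi> (lab j)) = 0\<^sub>v n
      \<longleftrightarrow> (\<exists>x\<in>S. \<phi> x \<noteq> 0) \<and> (\<forall>x\<in>S. (\<Sum>y\<in>S. a x y * \<phi> y) = 0)" for \<phi>
    unfolding labelled_mat_mult_vec[OF lab] labelled_vec_eq_0_iff[OF lab, of \<phi>]
      labelled_vec_eq_0_iff[OF lab, of "\<lambda>x. \<Sum>y\<in>S. a x y * \<phi> y"]
    by blast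
  have det_iff: "det ?M = 0 \<longleftrightarrow> (\<exists>v. v \<in> carrier_vec n \<and> v \<noteq> 0\<^sub>v n \<and> ?M *\<^sub>v v = 0\<^sub>v n)"
    by (rule det_0_iff_vec_prod_zero_field) simp
  show ?thesis
  proof
    assume "det ?M = 0"
    then obtain v where v: "v \<in> carrier_vec n" "v \<noteq> 0\<^sub>v n" "?M *\<^sub>v v = 0\<^sub>v n"
      using det_iff by blast
    define \<phi> where "\<phi> y = v $ inv_into {..<n} lab y" for y
    have "v = vec n (\<lambda>j. \<phi> (lab j))"
      using v(1) lab unfolding \<phi>_def by (auto simp: bij_betw_def inv_into_f_f)
    then show "singular_on S a"
      using v kernel_iff[of \<phi>] unfolding singular_on_def by auto
  next
    assume "singular_on S a"
    then obtain \<phi> where "(\<exists>x\<in>S. \<phi> x \<noteq> 0) \<and> (\<forall>x\<in>S. (\<Sum>y\<in>S. a x y * \<phi> y) = 0)"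
      unfolding singular_on_def by blast
    then show "det ?M = 0"
      using det_iff kernel_iff[of \<phi>] vec_carrier by blast
  qed
qed

lemma det_zeta_mat_neq_0:
  fixes c :: real
  assumes "finite_T0 S R" and "bij_betw lab {..<n} S" and "c \<noteq> 0"
  shows "det (mat n n (\<lambda>(i, j). if (lab i, lab j) \<in> R then c else 0)) \<noteq> 0"
proof
  assume "det (mat n n (\<lambda>(i, j). if (lab i, lab j) \<in> R then c else 0)) = 0"
  then have "singular_on S (\<lambda>x y. if (x, y) \<in> R then c else 0)"
    using det_labelled_mat_eq_0_iff[OF assms(2), of "\<lambda>x y. if (x, y) \<in> R then c else 0"] by simp
  then obtain \<phi> where nonzero: "\<exists>x\<in>S. \<phi> x \<noteq> 0"
    and kernel: "\<forall>x\<in>S. (\<Sum>y\<in>S. (if (x, y) \<in> R then c else 0) * \<phi> y) = 0"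
    unfolding singular_on_def by blast
  have "(\<Sum>y\<in>S. (if (x, y) \<in> R then c else 0) * \<phi> y) = c * (\<Sum>y\<in>{y\<in>S. (x, y) \<in> R}. \<phi> y)" for x
  proof -
    have "(\<Sum>y\<in>S. (if (x, y) \<in> R then c else 0) * \<phi> y) = (\<Sum>y\<in>S. if (x, y) \<in> R then c * \<phi> y else 0)"
      by (rule sum.cong) auto
    also have "\<dots> = (\<Sum>y\<in>{y\<in>S. (x, y) \<in> R}. c * \<phi> y)"
      using finite_T0_finite[OF assms(1)] by (simp add: sum.inter_filter)
    finally show ?thesis
      by (simp add: sum_distrib_left)
  qed
  then have "\<forall>x\<in>S. (\<Sum>y\<in>{y\<in>S. (x, y) \<in> R}. \<phi> y) = 0"
    using kernel assms(3) by simp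
  then show False
    using sum_upsets_eq_0_imp_eq_0[OF assms(1)] nonzero by blast
qed

lemma poset_matrix_corank:
  assumes "finite_T0 S R" and lab: "bij_betw lab {..<card S} S"
  shows "int (card S) - int (vec_space.rank (card S) (poset_matrix S R lab))
    = (if reduced_euler_char S R = 0 then 1 else 0)"
proof -
  define n where "n = card S"
  define M where "M = poset_matrix S R lab"
  define K where "K = mat n n (\<lambda>(i, j). if (lab i, lab j) \<in> R then -1 else 0 :: real)"
  define J where "J = mat n n (\<lambda>_. -1 :: real)"
  have carrier: "M \<in> carrier_mat n n" "K \<in> carrier_mat n n" "J \<in> carrier_mat n n"
    unfolding M_def K_def J_def poset_matrix_def n_def by simp_all
  have "M + J = K"
    unfolding M_def J_def K_def poset_matrix_def n_def by (rule eq_matI) simp_all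
  moreover have "vec_space.rank n K = n"
    using vec_space.det_rank_iff[OF carrier(2)] det_zeta_mat_neq_0[OF assms(1) lab[folded n_def]]
    unfolding K_def by simp
  moreover have "vec_space.rank n J \<le> 1"
    by (rule vec_space.rank_le_1_product_entries[OF carrier(3), of "\<lambda>_. -1" "\<lambda>_. 1"])
      (simp add: J_def)
  ultimately have lower: "n \<le> vec_space.rank n M + 1"
    using vec_space.rank_subadditive[OF carrier(1,3)] by simp
  have "vec_space.rank n M = n \<longleftrightarrow> det M \<noteq> 0"
    using vec_space.det_rank_iff[OF carrier(1)] by simp
  also have "\<dots> \<longleftrightarrow> reduced_euler_char S R \<noteq> 0"
    using det_labelled_mat_eq_0_iff[OF lab, of "\<lambda>x y. if (x, y) \<in> R then 0 else 1"]
      singular_on_poset_matrix_iff[OF assms(1)]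
    unfolding M_def poset_matrix_def by simp
  finally show ?thesis
    using lower vec_space.rank_le_nc[OF carrier(1)] unfolding M_def n_def by auto
qed

lemma rank_bar_eq:
  assumes "finite_T0 S R"
  shows "rank_bar S R = (if reduced_euler_char S R = 0 then 1 else 0)"
proof -
  have "\<exists>lab. bij_betw lab {..<card S} S"
    using ex_bij_betw_nat_finite[OF finite_T0_finite[OF assms]] by (simp add: atLeast0LessThan)
  then show ?thesis
    unfolding rank_bar_def by (rule poset_matrix_corank[OF assms someI_ex])
qed

section \<open>Contractible finite spaces\<close>

lemma openin_poset_topology:
  "openin (poset_topology S R) U \<longleftrightarrow> U \<subseteq> S \<and> (\<forall>x\<in>U. \<forall>y\<in>S. (y, x) \<in> R \<longrightarrow> y \<in> U)"
proof -
  have "istopology (\<lambda>U. U \<subseteq> S \<and> (\<forall>x\<in>U. \<forall>y\<in>S. (y, x) \<in> R \<longrightarrow> y \<in> U))"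
    unfolding istopology_def by blast
  then show ?thesis
    unfolding poset_topology_def by simp
qed

lemma topspace_poset_topology [simp]: "topspace (poset_topology S R) = S"
  unfolding topspace_def openin_poset_topology by blast

lemma openin_poset_topology_down_set:
  assumes "finite_T0 S R"
  shows "openin (poset_topology S R) {z\<in>S. (z, y) \<in> R}"
  unfolding openin_poset_topology using finite_T0_trans[OF assms] by blast

definition order_preserving :: "'a set \<Rightarrow> ('a \<times> 'a) set \<Rightarrow> ('a \<Rightarrow> 'a) \<Rightarrow> bool" where
  "order_preserving S R f \<longleftrightarrow> (\<forall>x\<in>S. f x \<in> S) \<and> (\<forall>x\<in>S. \<forall>y\<in>S. (x, y) \<in> R \<longrightarrow> (f x, f y) \<in> R)"

text \<open>Its reflexive transitive closure is the relation of being joined by a fence.\<close>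

definition comparable_maps :: "'a set \<Rightarrow> ('a \<times> 'a) set \<Rightarrow> ('a \<Rightarrow> 'a) \<Rightarrow> ('a \<Rightarrow> 'a) \<Rightarrow> bool" where
  "comparable_maps S R f g \<longleftrightarrow> order_preserving S R f \<and> order_preserving S R g \<and>
     ((\<forall>x\<in>S. (f x, g x) \<in> R) \<or> (\<forall>x\<in>S. (g x, f x) \<in> R))"

lemma order_preserving_converse: "order_preserving S (R\<inverse>) = order_preserving S R"
  unfolding order_preserving_def by auto

lemma comparable_maps_converse: "comparable_maps S (R\<inverse>) = comparable_maps S R"
  unfolding comparable_maps_def order_preserving_converse by auto

lemma symp_comparable_maps: "symp (comparable_maps S R)"
  unfolding comparable_maps_def by (auto intro: sympI)

lemma continuous_map_imp_order_preserving:
  assumes "finite_T0 S R" and f: "continuous_map (poset_topology S R) (poset_topology S R) f"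
  shows "order_preserving S R f"
proof -
  have maps_to: "\<forall>x\<in>S. f x \<in> S"
    using f unfolding continuous_map_def by auto
  have "(f x, f y) \<in> R" if "x \<in> S" "y \<in> S" "(x, y) \<in> R" for x y
  proof -
    have "openin (poset_topology S R) {z\<in>S. f z \<in> {z\<in>S. (z, f y) \<in> R}}"
      using openin_continuous_map_preimage[OF f openin_poset_topology_down_set[OF assms(1)]]
      by simp
    moreover have "y \<in> {z\<in>S. f z \<in> {z\<in>S. (z, f y) \<in> R}}"
      using that maps_to finite_T0_refl[OF assms(1)] by auto
    ultimately show ?thesis
      using that unfolding openin_poset_topology by blast
  qed
  then show ?thesis
    using maps_to unfolding order_preserving_def by blast
qed

lemma order_preserving_homotopy_slice:
  assumes "finite_T0 A R"
    and h: "continuous_map (prod_topology (top_of_set {0..1::real}) (poset_topology A R))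
      (poset_topology A R) h"
    and "t \<in> {0..1::real}"
  shows "order_preserving A R (\<lambda>x. h (t, x))"
  using continuous_map_compose[OF _ h, of "poset_topology A R" "\<lambda>x. (t, x)"] assms(3)
  by (intro continuous_map_imp_order_preserving[OF assms(1)])
    (simp add: continuous_map_paired comp_def)

lemma homotopy_locally_below:
  assumes "finite_T0 A R"
    and h: "continuous_map (prod_topology (top_of_set {0..1::real}) (poset_topology A R))
      (poset_topology A R) h"
    and t: "t \<in> {0..1::real}"
  shows "\<exists>N. openin (top_of_set {0..1::real}) N \<and> t \<in> N \<and>
    (\<forall>s\<in>N. \<forall>x\<in>A. (h (s, x), h (t, x)) \<in> R)"
proof (intro exI conjI ballI)
  let ?I = "top_of_set {0..1::real}"
  let ?N = "(\<Inter>x\<in>A. {s \<in> topspace ?I. h (s, x) \<in> {z\<in>A. (z, h (t, x)) \<in> R}}) \<inter> topspace ?I"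
  have path: "continuous_map ?I (poset_topology A R) (\<lambda>s. h (s, x))" if "x \<in> A" for x
    using continuous_map_compose[OF _ h, of ?I "\<lambda>s. (s, x)"] that
    by (simp add: continuous_map_paired comp_def)
  show "openin ?I ?N"
    using finite_T0_finite[OF assms(1)]
    by (intro openin_INT
        openin_continuous_map_preimage[OF path openin_poset_topology_down_set[OF assms(1)]])
  show "t \<in> ?N"
    using t order_preserving_homotopy_slice[OF assms] finite_T0_refl[OF assms(1)]
    by (auto simp: order_preserving_def)
  fix s x assume "s \<in> ?N" and "x \<in> A"
  then show "(h (s, x), h (t, x)) \<in> R"
    by auto
qed

lemma homotopic_imp_fence:
  assumes "finite_T0 A R"
    and "homotopic_with (\<lambda>_. True) (poset_topology A R) (poset_topology A R) f g"
  shows "(comparable_maps A R)\<^sup>*\<^sup>* f g"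
proof -
  let ?I = "top_of_set {0..1::real}"
  obtain h where h: "continuous_map (prod_topology ?I (poset_topology A R)) (poset_topology A R) h"
    and h0: "\<forall>x. h (0, x) = f x" and h1: "\<forall>x. h (1, x) = g x"
    using assms(2) unfolding homotopic_with_def by blast
  let ?fence = "\<lambda>s t. (comparable_maps A R)\<^sup>*\<^sup>* (\<lambda>x. h (s, x)) (\<lambda>x. h (t, x))"
  have local: "\<exists>N. openin ?I N \<and> t \<in> N \<and> (\<forall>s\<in>N. ?fence t s)" if t: "t \<in> {0..1::real}" for t
  proof -
    obtain N where N: "openin ?I N" "t \<in> N"
      and below: "\<forall>s\<in>N. \<forall>x\<in>A. (h (s, x), h (t, x)) \<in> R"
      using homotopy_locally_below[OF assms(1) h t] by blast
    have "comparable_maps A R (\<lambda>x. h (t, x)) (\<lambda>x. h (s, x))" if "s \<in> N" for s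
      using order_preserving_homotopy_slice[OF assms(1) h] below that t
        openin_imp_subset[OF N(1)]
      unfolding comparable_maps_def by auto
    then show ?thesis
      using N by blast
  qed
  have "?fence 0 1"
  proof (rule connected_equivalence_relation[of "{0..1::real}"])
    fix s t u
    assume "?fence s t"
    then show "?fence t s"
      using sympD[OF symp_rtranclp[OF symp_comparable_maps]] by blast
    assume "?fence t u"
    with \<open>?fence s t\<close> show "?fence s u"
      by (rule rtranclp_trans)
  qed (use local in auto)
  moreover have "(\<lambda>x. h (0, x)) = f" "(\<lambda>x. h (1, x)) = g"
    using h0 h1 by auto
  ultimately show ?thesis by simp
qed

lemma contractible_imp_fence_to_const:
  assumes "finite_T0 A R" and "A \<noteq> {}" and "contractible_space (poset_topology A R)"
  shows "\<exists>a\<in>A. (comparable_maps A R)\<^sup>*\<^sup>* id (\<lambda>_. a)"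
proof -
  obtain a where "a \<in> A" using assms(2) by blast
  then show ?thesis
    using assms(3) homotopic_imp_fence[OF assms(1)] by (auto simp: contractible_space_alt)
qed

text \<open>Up beat points are treated as down beat points of the converse order.\<close>

definition down_beat_point :: "'a set \<Rightarrow> ('a \<times> 'a) set \<Rightarrow> 'a \<Rightarrow> 'a \<Rightarrow> bool" where
  "down_beat_point A R x m \<longleftrightarrow> x \<in> A \<and> m \<in> A \<and> m \<noteq> x \<and> (m, x) \<in> R \<and>
     (\<forall>y\<in>A. (y, x) \<in> R \<and> y \<noteq> x \<longrightarrow> (y, m) \<in> R)"

lemma reduced_euler_char_remove_down_beat_point:
  assumes "finite_T0 A R" and beat: "down_beat_point A R x m"
  shows "reduced_euler_char (A - {x}) R = reduced_euler_char A R"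
proof -
  have "reduced_euler_char {y\<in>A. (y, x) \<in> R \<and> y \<noteq> x} R = 0"
    using beat finite_T0_finite[OF assms(1)] finite_T0_refl[OF assms(1)]
    by (intro reduced_euler_char_cone[of _ m]) (auto simp: down_beat_point_def)
  then show ?thesis
    using reduced_euler_char_remove_point[OF assms(1), of x] beat by (simp add: down_beat_point_def)
qed

lemma order_preserving_below_id_imp_down_beat_point:
  assumes "finite_T0 A R" and g: "order_preserving A R g"
    and below: "\<forall>x\<in>A. (g x, x) \<in> R" and moved: "\<exists>x\<in>A. g x \<noteq> x"
  shows "\<exists>x m. down_beat_point A R x m"
proof -
  obtain x where x: "x \<in> A" "g x \<noteq> x"
    and minimal: "\<forall>y\<in>A. g y \<noteq> y \<longrightarrow> (y, x) \<in> R \<longrightarrow> y = x"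
    using finite_T0_has_minimal[OF assms(1), of "{x\<in>A. g x \<noteq> x}"] moved by auto
  have "(y, g x) \<in> R" if "y \<in> A" "(y, x) \<in> R" "y \<noteq> x" for y
    using g that x minimal unfolding order_preserving_def by metis
  then have "down_beat_point A R x (g x)"
    using x g below unfolding down_beat_point_def order_preserving_def by auto
  then show ?thesis by blast
qed

lemma order_preserving_beat_retraction:
  assumes "finite_T0 A R" and beat: "down_beat_point A R x m"
  shows "order_preserving A R (\<lambda>y. if y = x then m else y)"
proof -
  have m: "m \<in> A" "(m, x) \<in> R" and below: "\<And>y. y \<in> A \<Longrightarrow> (y, x) \<in> R \<Longrightarrow> y \<noteq> x \<Longrightarrow> (y, m) \<in> R"
    using beat unfolding down_beat_point_def by auto
  have "((if y = x then m else y), (if z = x then m else z)) \<in> R"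
    if yz: "y \<in> A" "z \<in> A" "(y, z) \<in> R" for y z
  proof -
    have "(m, z) \<in> R" if "y = x"
      using finite_T0_trans[OF assms(1) m(2)] that yz(3) by simp
    moreover have "(y, m) \<in> R" if "z = x" "y \<noteq> x"
      using below that yz by simp
    ultimately show ?thesis
      using yz(3) finite_T0_refl[OF assms(1) m(1)] by auto
  qed
  then show ?thesis
    using m(1) unfolding order_preserving_def by auto
qed

lemma comparable_maps_retract:
  assumes "comparable_maps A R f g" and "A' \<subseteq> A" and "\<forall>x\<in>A. r x \<in> A'"
    and "order_preserving A R r"
  shows "comparable_maps A' (R \<inter> A' \<times> A') (r \<circ> f) (r \<circ> g)"
proof -
  have r: "\<forall>x\<in>A. \<forall>y\<in>A. (x, y) \<in> R \<longrightarrow> (r x, r y) \<in> R"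
    using assms(4) unfolding order_preserving_def by blast
  have "order_preserving A' (R \<inter> A' \<times> A') (r \<circ> k)" if "order_preserving A R k" for k
    using that assms(2,3) r unfolding order_preserving_def comp_def by blast
  moreover have "(\<forall>x\<in>A'. ((r \<circ> f) x, (r \<circ> g) x) \<in> R \<inter> A' \<times> A')
      \<or> (\<forall>x\<in>A'. ((r \<circ> g) x, (r \<circ> f) x) \<in> R \<inter> A' \<times> A')"
    using assms(1-3) r unfolding comparable_maps_def order_preserving_def comp_def by blast
  ultimately show ?thesis
    using assms(1) unfolding comparable_maps_def by blast
qed

lemma fence_retract:
  assumes "(comparable_maps A R)\<^sup>*\<^sup>* f g" and "A' \<subseteq> A" and "\<forall>x\<in>A. r x \<in> A'"
    and "order_preserving A R r"
  shows "(comparable_maps A' (R \<inter> A' \<times> A'))\<^sup>*\<^sup>* (r \<circ> f) (r \<circ> g)"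
  using assms(1)
proof (induction rule: rtranclp_induct)
  case (step h h')
  have "comparable_maps A' (R \<inter> A' \<times> A') (r \<circ> h) (r \<circ> h')"
    using comparable_maps_retract[OF step.hyps(2) assms(2-4)] .
  then show ?case
    using rtranclp.rtrancl_into_rtrancl[OF step.IH] by blast
qed simp

lemma fence_remove_down_beat_point:
  assumes "finite_T0 A R" and beat: "down_beat_point A R x m" and "a \<in> A"
    and fence: "(comparable_maps A R)\<^sup>*\<^sup>* id (\<lambda>_. a)"
  shows "\<exists>a'\<in>A - {x}. (comparable_maps (A - {x}) (R \<inter> (A - {x}) \<times> (A - {x})))\<^sup>*\<^sup>* id (\<lambda>_. a')"
proof -
  let ?r = "\<lambda>y. if y = x then m else y" and ?A = "A - {x}"
  have r_maps_to: "\<forall>y\<in>A. ?r y \<in> ?A"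
    using beat unfolding down_beat_point_def by auto
  have retraction: "comparable_maps ?A (R \<inter> ?A \<times> ?A) id ?r"
    using finite_T0_refl[OF assms(1)] unfolding comparable_maps_def order_preserving_def
    by auto
  have "?r \<circ> (\<lambda>_. a) = (\<lambda>_. ?r a)"
    by (rule ext) simp
  then have "(comparable_maps ?A (R \<inter> ?A \<times> ?A))\<^sup>*\<^sup>* ?r (\<lambda>_. ?r a)"
    using fence_retract[OF fence Diff_subset r_maps_to
        order_preserving_beat_retraction[OF assms(1) beat]]
    unfolding comp_id by simp
  with retraction have "(comparable_maps ?A (R \<inter> ?A \<times> ?A))\<^sup>*\<^sup>* id (\<lambda>_. ?r a)"
    by (rule converse_rtranclp_into_rtranclp)
  then show ?thesis
    using r_maps_to \<open>a \<in> A\<close> by blast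
qed

lemma fence_from_id_without_beat_points:
  assumes "finite_T0 A R" and no_beat: "\<forall>R'\<in>{R, R\<inverse>}. \<nexists>x m. down_beat_point A R' x m"
    and "(comparable_maps A R)\<^sup>*\<^sup>* id g"
  shows "\<forall>x\<in>A. g x = x"
  using assms(3)
proof (induction rule: rtranclp_induct)
  case (step f h)
  have "order_preserving A R h" and "order_preserving A (R\<inverse>) h"
    using step.hyps(2) unfolding comparable_maps_def order_preserving_converse by auto
  moreover have "(\<forall>x\<in>A. (h x, x) \<in> R) \<or> (\<forall>x\<in>A. (h x, x) \<in> R\<inverse>)"
    using step.hyps(2) step.IH unfolding comparable_maps_def by auto
  ultimately show ?case
    using order_preserving_below_id_imp_down_beat_point[OF assms(1)]
      order_preserving_below_id_imp_down_beat_point[OF finite_T0_converse[OF assms(1)]] no_beat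
    by blast
qed simp

lemma reduced_euler_char_fence_to_const:
  assumes "finite_T0 A R" and "a \<in> A" and "(comparable_maps A R)\<^sup>*\<^sup>* id (\<lambda>_. a)"
  shows "reduced_euler_char A R = 0"
  using assms
proof (induction "card A" arbitrary: A R a rule: less_induct)
  case less
  show ?case
  proof (cases "\<exists>R'\<in>{R, R\<inverse>}. \<exists>x m. down_beat_point A R' x m")
    case True
    then obtain R' x m where R': "R' \<in> {R, R\<inverse>}" and beat: "down_beat_point A R' x m"
      by blast
    have T0: "finite_T0 A R'" and fence: "(comparable_maps A R')\<^sup>*\<^sup>* id (\<lambda>_. a)"
      and same_char: "reduced_euler_char A R' = reduced_euler_char A R"
      using R' less.prems
      by (auto simp: finite_T0_converse comparable_maps_converse reduced_euler_char_converse)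
    obtain a' where a': "a' \<in> A - {x}"
      and fence': "(comparable_maps (A - {x}) (R' \<inter> (A - {x}) \<times> (A - {x})))\<^sup>*\<^sup>* id (\<lambda>_. a')"
      using fence_remove_down_beat_point[OF T0 beat less.prems(2) fence] by blast
    have "card (A - {x}) < card A"
      by (rule card_Diff1_less[OF finite_T0_finite[OF T0]]) (use beat in \<open>simp add: down_beat_point_def\<close>)
    then have "reduced_euler_char (A - {x}) (R' \<inter> (A - {x}) \<times> (A - {x})) = 0"
      using less.hyps[OF _ finite_T0_subset[OF T0 Diff_subset] a' fence'] by blast
    then show ?thesis
      using reduced_euler_char_remove_down_beat_point[OF T0 beat] same_char
      by (simp add: reduced_euler_char_restrict)
  next
    case False
    then have "\<forall>y\<in>A. y = a"
      using fence_from_id_without_beat_points[OF less.prems(1) _ less.prems(3)] by auto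
    then have "\<forall>z\<in>A. (a, z) \<in> R \<or> (z, a) \<in> R"
      using finite_T0_refl[OF less.prems(1,2)] by metis
    then show ?thesis
      by (rule reduced_euler_char_cone[OF finite_T0_finite[OF less.prems(1)] less.prems(2)
            finite_T0_refl[OF less.prems(1,2)]])
  qed
qed

lemma reduced_euler_char_contractible:
  assumes "finite_T0 S R" and "D \<subseteq> S" and "poset_contractible D R"
  shows "reduced_euler_char D R = 0"
proof -
  have T0: "finite_T0 D (R \<inter> D \<times> D)"
    using finite_T0_subset[OF assms(1,2)] .
  obtain a where "a \<in> D" and "(comparable_maps D (R \<inter> D \<times> D))\<^sup>*\<^sup>* id (\<lambda>_. a)"
    using assms(3) contractible_imp_fence_to_const[OF T0] unfolding poset_contractible_def by blast
  then show ?thesis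
    using reduced_euler_char_fence_to_const[OF T0] reduced_euler_char_restrict by metis
qed

section \<open>Invariance under simple homotopy equivalence\<close>

lemma reduced_euler_char_remove_weak_beat_point:
  assumes "finite_T0 S R" and "weak_beat_point S R x"
  shows "reduced_euler_char (S - {x}) R = reduced_euler_char S R"
  using assms(2) reduced_euler_char_remove_point[OF assms(1)]
    reduced_euler_char_contractible[OF assms(1)]
  unfolding weak_beat_point_def by fastforce

lemma reduced_euler_char_elementary_move:
  assumes "elementary_move P Q"
  shows "reduced_euler_char (fst P) (snd P) = reduced_euler_char (fst Q) (snd Q)"
  using assms reduced_euler_char_remove_weak_beat_point reduced_euler_char_restrict
  unfolding elementary_move_def by metis

lemma reduced_euler_char_simple_homotopy_equivalent:
  assumes "simple_homotopy_equivalent S R T Q"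
  shows "reduced_euler_char S R = reduced_euler_char T Q"
proof -
  obtain P0 P1 where "poset_homeomorphic S R (fst P0) (snd P0)"
    and moves: "elementary_move\<^sup>*\<^sup>* P0 P1" and "poset_homeomorphic (fst P1) (snd P1) T Q"
    using assms unfolding simple_homotopy_equivalent_def by blast
  moreover have "reduced_euler_char (fst P0) (snd P0) = reduced_euler_char (fst P1) (snd P1)"
    using moves by induction (simp_all add: reduced_euler_char_elementary_move)
  ultimately show ?thesis
    using reduced_euler_char_poset_homeomorphic by metis
qed

theorem mainTheorem9:
  fixes S :: "'a set" and R :: "('a \<times> 'a) set" and T :: "'b set" and Q :: "('b \<times> 'b) set"
  assumes "finite_T0 S R" and "finite_T0 T Q"
    and "simple_homotopy_equivalent S R T Q"
  shows "rank_bar S R = rank_bar T Q"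
  using rank_bar_eq[OF assms(1)] rank_bar_eq[OF assms(2)]
    reduced_euler_char_simple_homotopy_equivalent[OF assms(3)]
  by simp

end
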